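(* Let $X,Y\subset\mathbf{N}$ be two $n$-element sets, $f:X\to Y$ a bijection, and $\pi\in S_n$ the permutation order-isomorphic to $f$. Suppose $\pi\in H_k^+\cup H_k^-$ for some $k\in\mathbf{N}$. Then every partition of $X$ into intervals $J_1<J_2<\dots<J_r$ can be refined by a partition of $X$ into intervals $I_1<I_2<\dots<I_s$ such that $s\le r+(k-1)(r-1)$ and each image $f(I_i)$ is an interval in $Y$. Similarly, every partition of $Y$ into $r$ intervals can be refined by a partition of $Y$ into at most $r+(k-1)(r-1)$ intervals each of which is mapped by $f^{-1}$ onto an interval in $X$.
   Context: For $X=\{x_1<\dots<x_n\}$ and $Y=\{y_1<\dots<y_n\}$, the permutation $\pi\in S_n$ order-isomorphic to a bijection $f:X\to Y$ is defined by $\pi(i)=j\Leftrightarrow f(x_i)=y_j$. An interval in $X$ is a set $\{x_i,x_{i+1},\dots,x_j\}$ with $1\le i\le j\le n$; for sets $A<B$ means $a<b$ for all $a\in A,b\in B$. For $\sigma\in S_n,\tau\in S_m$, $\sigma\oplus\tau\in S_{n+m}$ equals $\sigma(i)$ at $i\le n$ and $n+\tau(i-n)$ at $i>n$; $\sigma\ominus\tau$ equals $m+\sigma(i)$ at $i\le n$ and $\tau(i-n)$ at $i>n$. A permutation is up-indecomposable (down-indecomposable) if it is not $\sigma\oplus\tau$ (not $\sigma\ominus\tau$) with $\sigma,\tau$ nonempty. Every $\pi$ has a unique decomposition $\pi=\sigma_1\oplus\dots\oplus\sigma_r$ into up-indecomposable blocks; $h^+(\pi)$ is the maximum block length; $h^-$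 is defined analogously with $\ominus$. $H_k^+=\{\pi:h^+(\pi)<k\}$, $H_k^-=\{\pi:h^-(\pi)<k\}$. *)

theory Defs
  imports Main
begin

text \<open>Permutations of length n are lists that enumerate {1..n} in one-line notation.\<close>

definition is_perm :: "nat list \<Rightarrow> bool" where
  "is_perm p \<longleftrightarrow> distinct p \<and> set p = {1..length p}"

definition oplus :: "nat list \<Rightarrow> nat list \<Rightarrow> nat list" where
  "oplus s t = s @ map (\<lambda>x. x + length s) t"

definition ominus :: "nat list \<Rightarrow> nat list \<Rightarrow> nat list" where
  "ominus s t = map (\<lambda>x. x + length t) s @ t"

definition up_indec :: "nat list \<Rightarrow> bool" where
  "up_indec p \<longleftrightarrow> is_perm p \<and>
     \<not> (\<exists>s t. is_perm s \<and> is_perm t \<and> s \<noteq> [] \<and> t \<noteq> [] \<and> p = oplus s t)"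

definition down_indec :: "nat list \<Rightarrow> bool" where
  "down_indec p \<longleftrightarrow> is_perm p \<and>
     \<not> (\<exists>s t. is_perm s \<and> is_perm t \<and> s \<noteq> [] \<and> t \<noteq> [] \<and> p = ominus s t)"

text \<open>Decomposition into nonempty indecomposable blocks (unique).\<close>

definition up_decomp :: "nat list \<Rightarrow> nat list list \<Rightarrow> bool" where
  "up_decomp p bs \<longleftrightarrow> (\<forall>b\<in>set bs. b \<noteq> [] \<and> up_indec b) \<and> foldr oplus bs [] = p"

definition down_decomp :: "nat list \<Rightarrow> nat list list \<Rightarrow> bool" where
  "down_decomp p bs \<longleftrightarrow> (\<forall>b\<in>set bs. b \<noteq> [] \<and> down_indec b) \<and> foldr ominus bs [] = p"

definition h_plus :: "nat list \<Rightarrow> nat" where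
  "h_plus p = Max (length ` set (THE bs. up_decomp p bs))"

definition h_minus :: "nat list \<Rightarrow> nat" where
  "h_minus p = Max (length ` set (THE bs. down_decomp p bs))"

definition H_plus :: "nat \<Rightarrow> nat list set" where
  "H_plus k = {p. is_perm p \<and> h_plus p < k}"

definition H_minus :: "nat \<Rightarrow> nat list set" where
  "H_minus k = {p. is_perm p \<and> h_minus p < k}"

text \<open>The permutation order-isomorphic to f : X \<rightarrow> Y: p(i) = j iff f(x_i) = y_j (1-indexed).\<close>

definition order_iso_perm :: "nat set \<Rightarrow> nat set \<Rightarrow> (nat \<Rightarrow> nat) \<Rightarrow> nat list \<Rightarrow> bool" where
  "order_iso_perm X Y f p \<longleftrightarrow> is_perm p \<and> length p = card X \<and>
     (\<forall>i<length p. sorted_list_of_set Y ! (p ! i - 1) = f (sorted_list_of_set X ! i))"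

definition is_interval :: "nat set \<Rightarrow> nat set \<Rightarrow> bool" where
  "is_interval X S \<longleftrightarrow> (\<exists>a\<in>X. \<exists>b\<in>X. a \<le> b \<and> S = X \<inter> {a..b})"

definition set_less :: "nat set \<Rightarrow> nat set \<Rightarrow> bool" where
  "set_less A B \<longleftrightarrow> (\<forall>a\<in>A. \<forall>b\<in>B. a < b)"

definition interval_partition :: "nat set \<Rightarrow> nat set list \<Rightarrow> bool" where
  "interval_partition X Js \<longleftrightarrow> (\<forall>J\<in>set Js. is_interval X J) \<and>
     sorted_wrt set_less Js \<and> \<Union>(set Js) = X"

definition refines :: "nat set list \<Rightarrow> nat set list \<Rightarrow> bool" where
  "refines Is Js \<longleftrightarrow> (\<forall>I\<in>set Is. \<exists>J\<in>set Js. I \<subseteq> J)"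

end

theory Submission
  imports Defs
begin

text \<open>
  If \<open>p = \<sigma>\<^sub>1 \<oplus> \<dots> \<oplus> \<sigma>\<^sub>m\<close> with all blocks shorter than \<open>k\<close>, the block boundaries form a
  set \<open>L\<close> of cut positions with gaps shorter than \<open>k\<close>, and \<open>p\<close> maps the positions between
  any two cuts of \<open>L\<close> onto consecutive values; so \<open>f\<close> maps the corresponding part of \<open>X\<close>
  onto an interval of \<open>Y\<close>. The \<open>\<ominus>\<close> case reduces to this one by reversing \<open>p\<close>, which
  turns \<open>\<ominus>\<close>-decompositions into \<open>\<oplus>\<close>-decompositions.

  Given a partition of \<open>X\<close> into \<open>r\<close> intervals, each of its \<open>r - 1\<close> inner cuts that falls
  strictly inside a block is completed by all positions of that block, adding at most \<open>k - 1\<close>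
  cuts. Every piece of the refined partition is then a singleton or a union of whole blocks,
  hence mapped onto an interval. Value blocks correspond to position blocks, so the same
  argument applied to \<open>inv_into X f\<close> refines partitions of \<open>Y\<close>.
\<close>

section \<open>Block decompositions of permutations\<close>

lemma is_perm_rev [simp]: "is_perm (rev p) \<longleftrightarrow> is_perm p"
  by (simp add: is_perm_def)

lemma oplus_Nil [simp]: "oplus [] t = t" "oplus s [] = s"
  by (simp_all add: oplus_def)

lemma length_oplus [simp]: "length (oplus s t) = length s + length t"
  by (simp add: oplus_def)

lemma oplus_assoc: "oplus (oplus a b) c = oplus a (oplus b c)"
  by (simp add: oplus_def add.assoc)

lemma rev_oplus: "rev (oplus s t) = ominus (rev t) (rev s)"
  by (simp add: oplus_def ominus_def rev_map)

lemma foldr_oplus_append: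
  "foldr oplus (xs @ ys) [] = oplus (foldr oplus xs []) (foldr oplus ys [])"
  by (induction xs) (auto simp: oplus_assoc)

lemma down_indec_iff_up_indec_rev: "down_indec p \<longleftrightarrow> up_indec (rev p)"
proof -
  have "(\<exists>s t. is_perm s \<and> is_perm t \<and> s \<noteq> [] \<and> t \<noteq> [] \<and> p = ominus s t) \<longleftrightarrow>
        (\<exists>s t. is_perm s \<and> is_perm t \<and> s \<noteq> [] \<and> t \<noteq> [] \<and> rev p = oplus s t)"
  proof
    assume "\<exists>s t. is_perm s \<and> is_perm t \<and> s \<noteq> [] \<and> t \<noteq> [] \<and> p = ominus s t"
    then obtain s t where st: "is_perm s" "is_perm t" "s \<noteq> []" "t \<noteq> []" "p = ominus s t"
      by blast
    then have "rev p = oplus (rev t) (rev s)"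
      by (metis rev_oplus rev_rev_ident)
    with st show "\<exists>s t. is_perm s \<and> is_perm t \<and> s \<noteq> [] \<and> t \<noteq> [] \<and> rev p = oplus s t"
      by (intro exI[of _ "rev t"] exI[of _ "rev s"]) simp
  next
    assume "\<exists>s t. is_perm s \<and> is_perm t \<and> s \<noteq> [] \<and> t \<noteq> [] \<and> rev p = oplus s t"
    then obtain s t where "is_perm s" "is_perm t" "s \<noteq> []" "t \<noteq> []" "p = rev (oplus s t)"
      by (metis rev_rev_ident)
    then show "\<exists>s t. is_perm s \<and> is_perm t \<and> s \<noteq> [] \<and> t \<noteq> [] \<and> p = ominus s t"
      by (metis is_perm_rev rev_is_Nil_conv rev_oplus)
  qed
  then show ?thesis
    by (simp add: down_indec_def up_indec_def)
qed

lemma foldr_ominus_eq_rev_foldr_oplus: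
  "foldr ominus bs [] = rev (foldr oplus (rev (map rev bs)) [])"
  by (induction bs) (simp_all add: foldr_oplus_append rev_oplus del: foldr_append)

lemma down_decomp_iff_up_decomp_rev:
  "down_decomp p bs \<longleftrightarrow> up_decomp (rev p) (rev (map rev bs))"
  by (auto simp: down_decomp_def up_decomp_def down_indec_iff_up_indec_rev
      foldr_ominus_eq_rev_foldr_oplus)

lemma up_decomp_exists: "is_perm p \<Longrightarrow> \<exists>bs. up_decomp p bs"
proof (induction "length p" arbitrary: p rule: less_induct)
  case less
  show ?case
  proof (cases "p = [] \<or> up_indec p")
    case True
    then show ?thesis
      by (intro exI[of _ "if p = [] then [] else [p]"]) (auto simp: up_decomp_def)
  next
    case False
    then obtain s t where st: "is_perm s" "is_perm t" "s \<noteq> []" "t \<noteq> []" "p = oplus s t"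
      using less.prems unfolding up_indec_def by blast
    then have "length s < length p" "length t < length p"
      by auto
    then obtain bs cs where "up_decomp s bs" "up_decomp t cs"
      using less st by metis
    then have "up_decomp p (bs @ cs)"
      using st by (auto simp: up_decomp_def foldr_oplus_append simp del: foldr_append)
    then show ?thesis ..
  qed
qed

lemma oplus_prefix_split:
  assumes c: "is_perm c" and b: "is_perm b" and "length b < length c"
    and prefix: "take (length b) c = b"
  shows "\<exists>t. is_perm t \<and> t \<noteq> [] \<and> c = oplus b t"
proof -
  define m where "m = length b"
  define d where "d = drop m c"
  have c_eq: "c = b @ d"
    using prefix unfolding d_def m_def by (metis append_take_drop_id)
  then have "distinct d" "set b \<inter> set d = {}"
    using c by (auto simp: is_perm_def)
  have set_d: "set d = {m + 1..length c}"
  proof -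
    have "set d = set c - set b"
      using c_eq \<open>set b \<inter> set d = {}\<close> by auto
    also have "\<dots> = {m + 1..length c}"
      using b c by (auto simp: is_perm_def m_def)
    finally show ?thesis .
  qed
  define t where "t = map (\<lambda>x. x - m) d"
  have "map (\<lambda>x. x + m) t = d"
    unfolding t_def map_map by (rule map_idI) (use set_d in auto)
  then have "c = oplus b t"
    using c_eq by (simp add: oplus_def m_def)
  moreover have "is_perm t"
  proof -
    have "inj_on (\<lambda>x. x - m) (set d)"
      using set_d by (auto simp: inj_on_def)
    moreover have "(\<lambda>x. x - m) ` {m + 1..length c} = {1..length c - m}"
      by (auto simp: image_iff intro!: bexI[where x="_ + m"])
    ultimately show ?thesis
      unfolding is_perm_def t_def using \<open>distinct d\<close> set_d
      by (simp add: distinct_map d_def)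
  qed
  moreover have "t \<noteq> []"
    using \<open>length b < length c\<close> by (simp add: t_def d_def m_def)
  ultimately show ?thesis
    by blast
qed

lemma oplus_cancel_up_indec:
  assumes "up_indec b" "up_indec c" "b \<noteq> []" "c \<noteq> []" "oplus b r = oplus c r'"
  shows "b = c" "r = r'"
proof -
  have no_shorter: False if indec: "up_indec b" "up_indec c" and "b \<noteq> []"
    and eq: "oplus b r = oplus c r'" and shorter: "length b < length c" for b c r r'
  proof -
    have "take (length b) c = take (length b) (oplus c r')"
      using shorter by (simp add: oplus_def)
    also have "\<dots> = take (length b) (oplus b r)"
      using eq by simp
    also have "\<dots> = b"
      by (simp add: oplus_def)
    finally obtain t where "is_perm t" "t \<noteq> []" "c = oplus b t"
      using oplus_prefix_split indec shorter by (meson up_indec_def)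
    then show False
      using indec \<open>b \<noteq> []\<close> unfolding up_indec_def by blast
  qed
  have "length b = length c"
    using no_shorter[of b c r r'] no_shorter[of c b r' r] assms by fastforce
  then show "b = c"
    using assms(5) by (simp add: oplus_def)
  then have "map (\<lambda>x. x + length b) r = map (\<lambda>x. x + length b) r'"
    using assms(5) by (simp add: oplus_def)
  then show "r = r'"
    by (simp add: inj_map_eq_map)
qed

lemma up_decomp_unique: "up_decomp p bs \<Longrightarrow> up_decomp p cs \<Longrightarrow> bs = cs"
proof (induction bs arbitrary: p cs)
  case Nil
  then show ?case
    by (cases cs) (auto simp: up_decomp_def oplus_def)
next
  case (Cons b bs)
  then obtain c cs' where cs: "cs = c # cs'"
    by (cases cs) (auto simp: up_decomp_def oplus_def)
  have "up_indec b" "up_indec c" "b \<noteq> []" "c \<noteq> []"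
    "oplus b (foldr oplus bs []) = oplus c (foldr oplus cs' [])"
    using Cons.prems cs by (auto simp: up_decomp_def)
  from oplus_cancel_up_indec[OF this]
  have "b = c" "foldr oplus bs [] = foldr oplus cs' []" .
  then show ?case
    using Cons.IH[of "foldr oplus bs []" cs'] Cons.prems cs by (auto simp: up_decomp_def)
qed

lemma up_decomp_The: "is_perm p \<Longrightarrow> up_decomp p (THE bs. up_decomp p bs)"
  by (metis theI up_decomp_exists up_decomp_unique)

lemma h_minus_eq_h_plus_rev:
  assumes "is_perm p"
  shows "h_minus p = h_plus (rev p)"
proof -
  define cs where "cs = (THE cs. up_decomp (rev p) cs)"
  have "up_decomp (rev p) cs"
    using assms unfolding cs_def by (simp add: up_decomp_The)
  moreover have "rev (map rev bs) = cs \<longleftrightarrow> bs = map rev (rev cs)" for bs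
    by (auto simp: rev_map)
  ultimately have "down_decomp p bs \<longleftrightarrow> bs = map rev (rev cs)" for bs
    unfolding down_decomp_iff_up_decomp_rev by (metis up_decomp_unique)
  then have "(THE bs. down_decomp p bs) = map rev (rev cs)"
    by simp
  then show ?thesis
    unfolding h_minus_def h_plus_def cs_def[symmetric] by (simp add: image_image)
qed

lemma H_minus_iff_rev_H_plus: "p \<in> H_minus k \<longleftrightarrow> rev p \<in> H_plus k"
  by (auto simp: H_minus_def H_plus_def h_minus_eq_h_plus_rev)

lemma H_plus_up_decomp:
  assumes "p \<in> H_plus k"
  shows "\<exists>bs. up_decomp p bs \<and> (\<forall>b\<in>set bs. length b < k)"
proof -
  let ?bs = "THE bs. up_decomp p bs"
  have "up_decomp p ?bs" "Max (length ` set ?bs) < k"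
    using assms by (auto simp: H_plus_def h_plus_def up_decomp_The)
  moreover have "length b \<le> Max (length ` set ?bs)" if "b \<in> set ?bs" for b
    using that by simp
  ultimately show ?thesis
    by (meson le_less_trans)
qed

section \<open>Block boundaries as cut sets\<close>

definition cut_set :: "nat \<Rightarrow> nat set \<Rightarrow> bool" where
  "cut_set n C \<longleftrightarrow> C \<subseteq> {0..n} \<and> 0 \<in> C \<and> n \<in> C"

definition short_gaps :: "nat \<Rightarrow> nat \<Rightarrow> nat set \<Rightarrow> bool" where
  "short_gaps n k L \<longleftrightarrow> cut_set n L \<and>
     (\<forall>e\<le>n. e \<notin> L \<longrightarrow> (\<exists>a\<in>L. \<exists>b\<in>L. a < e \<and> e < b \<and> b - a < k))"

lemma short_gaps_shift:
  assumes L: "short_gaps n k L" and "0 < m" "m < k"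
  shows "short_gaps (m + n) k (insert 0 ((+) m ` L))"
proof -
  let ?L = "insert 0 ((+) m ` L)"
  have "m \<in> ?L"
    using L by (force simp: short_gaps_def cut_set_def)
  have "\<exists>a\<in>?L. \<exists>b\<in>?L. a < e \<and> e < b \<and> b - a < k"
    if "e \<le> m + n" "e \<notin> ?L" for e
  proof (cases "e < m")
    case True
    then show ?thesis
      using that \<open>m \<in> ?L\<close> \<open>m < k\<close> by (intro bexI[of _ 0] bexI[of _ m]) auto
  next
    case False
    then have "e - m \<le> n" "e - m \<notin> L"
      using that by (auto simp: image_iff)
    then obtain a b where "a \<in> L" "b \<in> L" "a < e - m" "e - m < b" "b - a < k"
      using L by (auto simp: short_gaps_def)
    then show ?thesis
      using False by (intro bexI[of _ "m + a"] bexI[of _ "m + b"]) auto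
  qed
  then show ?thesis
    using L by (auto simp: short_gaps_def cut_set_def)
qed

lemma short_gaps_flip:
  assumes L: "short_gaps n k L"
  shows "short_gaps n k ((\<lambda>l. n - l) ` L)"
proof -
  let ?L = "(\<lambda>l. n - l) ` L"
  have "\<exists>a\<in>?L. \<exists>b\<in>?L. a < e \<and> e < b \<and> b - a < k" if "e \<le> n" "e \<notin> ?L" for e
  proof -
    have "n - e \<notin> L"
      using that by (metis diff_diff_cancel image_eqI)
    then obtain a b where "a \<in> L" "b \<in> L" "a < n - e" "n - e < b" "b - a < k"
      using L unfolding short_gaps_def by (meson diff_le_self)
    moreover have "b \<le> n"
      using \<open>b \<in> L\<close> L by (auto simp: short_gaps_def cut_set_def)
    ultimately show ?thesis
      using that by (intro bexI[of _ "n - b"] bexI[of _ "n - a"]) auto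
  qed
  moreover have "0 \<in> ?L" "n \<in> ?L"
    using L by (force simp: short_gaps_def cut_set_def)+
  ultimately show ?thesis
    by (auto simp: short_gaps_def cut_set_def)
qed

lemma up_decomp_prefix_cuts:
  assumes "up_decomp p bs" "\<forall>b\<in>set bs. length b < k"
  shows "\<exists>L. short_gaps (length p) k L \<and> (\<forall>l\<in>L. set (take l p) = {1..l})"
  using assms
proof (induction bs arbitrary: p)
  case Nil
  then show ?case
    by (intro exI[of _ "{0}"]) (auto simp: short_gaps_def cut_set_def up_decomp_def)
next
  case (Cons b bs)
  define p' where "p' = foldr oplus bs []"
  define m where "m = length b"
  have p: "p = b @ map (\<lambda>x. x + m) p'"
    using Cons.prems by (simp add: up_decomp_def oplus_def p'_def m_def)
  have b: "is_perm b" "0 < m" "m < k"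
    using Cons.prems by (auto simp: up_decomp_def up_indec_def m_def)
  obtain L where L: "short_gaps (length p') k L" "\<forall>l\<in>L. set (take l p') = {1..l}"
    using Cons by (auto simp: up_decomp_def p'_def)
  have "set (take l p) = {1..l}" if l: "l \<in> insert 0 ((+) m ` L)" for l
  proof (cases "l = 0")
    case False
    then obtain l' where "l' \<in> L" "l = m + l'"
      using l by blast
    then have "set (take l p) = set b \<union> (\<lambda>x. x + m) ` {1..l'}"
      using L(2) by (simp add: p m_def take_map)
    also have "\<dots> = {1..m} \<union> {1 + m..l' + m}"
      using b(1) by (simp add: is_perm_def m_def image_add_atLeastAtMost')
    also have "\<dots> = {1..l}"
      using \<open>l = m + l'\<close> by auto
    finally show ?thesis .
  qed simp
  moreover have "short_gaps (length p) k (insert 0 ((+) m ` L))"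
    using short_gaps_shift[OF L(1) b(2,3)] by (simp add: p m_def)
  ultimately show ?case
    by blast
qed

lemma nth_image_eq_set_take_diff:
  assumes "distinct xs" "a \<le> b" "b \<le> length xs"
  shows "(!) xs ` {a..<b} = set (take b xs) - set (take a xs)"
proof -
  have "{a..<b} = {0..<b} - {0..<a}"
    by auto
  then have "(!) xs ` {a..<b} = (!) xs ` ({0..<b} - {0..<a})"
    by simp
  also have "\<dots> = (!) xs ` {0..<b} - (!) xs ` {0..<a}"
    using assms by (intro inj_on_image_set_diff[of _ "{0..<b}"] inj_on_nth) auto
  also have "\<dots> = set (take b xs) - set (take a xs)"
    using assms by (simp add: nth_image)
  finally show ?thesis .
qed

lemma H_plus_segments:
  assumes "p \<in> H_plus k"
  shows "\<exists>L. short_gaps (length p) k L \<and>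
    (\<forall>a\<in>L. \<forall>b\<in>L. a \<le> b \<longrightarrow> (!) p ` {a..<b} = {Suc a..b})"
proof -
  obtain L where L: "short_gaps (length p) k L" "\<forall>l\<in>L. set (take l p) = {1..l}"
    using H_plus_up_decomp[OF assms] up_decomp_prefix_cuts by blast
  have "distinct p"
    using assms by (simp add: H_plus_def is_perm_def)
  have "(!) p ` {a..<b} = {Suc a..b}" if "a \<in> L" "b \<in> L" "a \<le> b" for a b
  proof -
    have "b \<le> length p"
      using L(1) that by (auto simp: short_gaps_def cut_set_def)
    then show ?thesis
      using nth_image_eq_set_take_diff[OF \<open>distinct p\<close> \<open>a \<le> b\<close>] L(2) that by auto
  qed
  with L(1) show ?thesis
    by blast
qed

lemma nth_image_rev:
  assumes "b \<le> length xs"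
  shows "(!) (rev xs) ` {a..<b} = (!) xs ` {length xs - b..<length xs - a}"
proof -
  have "(\<lambda>i. length xs - Suc i) ` {a..<b} = {length xs - b..<length xs - a}"
  proof
    show "{length xs - b..<length xs - a} \<subseteq> (\<lambda>i. length xs - Suc i) ` {a..<b}"
    proof
      fix j assume "j \<in> {length xs - b..<length xs - a}"
      then show "j \<in> (\<lambda>i. length xs - Suc i) ` {a..<b}"
        using assms by (intro image_eqI[of _ _ "length xs - Suc j"]) auto
    qed
  qed (use assms in auto)
  moreover have "(!) (rev xs) ` {a..<b} = (!) xs ` (\<lambda>i. length xs - Suc i) ` {a..<b}"
    using assms by (auto simp: image_image rev_nth intro!: image_cong)
  ultimately show ?thesis
    by simp
qed

lemma H_minus_segments:
  assumes "p \<in> H_minus k"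
  shows "\<exists>L. short_gaps (length p) k L \<and>
    (\<forall>a\<in>L. \<forall>b\<in>L. a \<le> b \<longrightarrow> (!) p ` {length p - b..<length p - a} = {Suc a..b})"
proof -
  obtain L where L: "short_gaps (length p) k L"
    and seg: "\<forall>a\<in>L. \<forall>b\<in>L. a \<le> b \<longrightarrow> (!) (rev p) ` {a..<b} = {Suc a..b}"
    using H_plus_segments[of "rev p" k] assms by (auto simp: H_minus_iff_rev_H_plus)
  have "b \<le> length p" if "b \<in> L" for b
    using L that by (auto simp: short_gaps_def cut_set_def)
  then show ?thesis
    using L seg by (metis nth_image_rev)
qed

text \<open>Positions of \<open>p\<close> are counted from 0 and its values from 1: the positions
  \<open>a, \<dots>, b - 1\<close> carry the values \<open>c + 1, \<dots>, d\<close>.\<close>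

definition segments_correspond :: "nat list \<Rightarrow> nat set \<Rightarrow> nat set \<Rightarrow> bool" where
  "segments_correspond p L L' \<longleftrightarrow>
     (\<forall>a\<in>L. \<forall>b\<in>L. a < b \<longrightarrow> (\<exists>c\<in>L'. \<exists>d\<in>L'. c < d \<and> (!) p ` {a..<b} = {Suc c..d})) \<and>
     (\<forall>c\<in>L'. \<forall>d\<in>L'. c < d \<longrightarrow> (\<exists>a\<in>L. \<exists>b\<in>L. a < b \<and> (!) p ` {a..<b} = {Suc c..d}))"

lemma H_plus_union_H_minus_segments:
  assumes "p \<in> H_plus k \<union> H_minus k"
  shows "\<exists>L L'. short_gaps (length p) k L \<and> short_gaps (length p) k L' \<and>
    segments_correspond p L L'"
proof (cases "p \<in> H_plus k")
  case True
  then obtain L where "short_gaps (length p) k L"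
    and seg: "\<forall>a\<in>L. \<forall>b\<in>L. a \<le> b \<longrightarrow> (!) p ` {a..<b} = {Suc a..b}"
    using H_plus_segments by blast
  moreover have "segments_correspond p L L"
    unfolding segments_correspond_def using seg by (meson less_imp_le)
  ultimately show ?thesis
    by blast
next
  case False
  let ?n = "length p"
  obtain L where L: "short_gaps ?n k L"
    and seg: "\<forall>a\<in>L. \<forall>b\<in>L. a \<le> b \<longrightarrow> (!) p ` {?n - b..<?n - a} = {Suc a..b}"
    using False assms H_minus_segments by blast
  have le_n: "l \<le> ?n" if "l \<in> L" for l
    using L that by (auto simp: short_gaps_def cut_set_def)
  have "segments_correspond p ((\<lambda>l. ?n - l) ` L) L"
    unfolding segments_correspond_def
  proof (intro conjI ballI impI)
    fix a' b' assume "a' \<in> (\<lambda>l. ?n - l) ` L" "b' \<in> (\<lambda>l. ?n - l) ` L" "a' < b'"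
    then obtain a b where "a \<in> L" "b \<in> L" "a' = ?n - b" "b' = ?n - a" "a < b"
      using le_n by (auto simp: image_iff)
    then show "\<exists>c\<in>L. \<exists>d\<in>L. c < d \<and> (!) p ` {a'..<b'} = {Suc c..d}"
      using seg by (intro bexI[of _ a] bexI[of _ b]) auto
  next
    fix c d assume "c \<in> L" "d \<in> L" "c < d"
    moreover have "?n - d < ?n - c"
      using le_n[OF \<open>d \<in> L\<close>] \<open>c < d\<close> by linarith
    moreover have "(!) p ` {?n - d..<?n - c} = {Suc c..d}"
      using seg \<open>c \<in> L\<close> \<open>d \<in> L\<close> \<open>c < d\<close> by simp
    ultimately show "\<exists>a\<in>(\<lambda>l. ?n - l) ` L. \<exists>b\<in>(\<lambda>l. ?n - l) ` L. a < b \<and> (!) p ` {a..<b} = {Suc c..d}"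
      by blast
  qed
  then show ?thesis
    using L short_gaps_flip[OF L] by blast
qed

section \<open>Intervals of a sorted list and partitions given by cut sets\<close>

lemma strict_sorted_nth_le_iff:
  fixes xs :: "'a::linorder list"
  assumes "sorted_wrt (<) xs" "i < length xs" "j < length xs"
  shows "xs ! i \<le> xs ! j \<longleftrightarrow> i \<le> j"
proof
  show "xs ! i \<le> xs ! j \<Longrightarrow> i \<le> j"
    using sorted_wrt_nth_less[OF assms(1), of j i] assms(2) by (meson leD not_less)
  show "i \<le> j \<Longrightarrow> xs ! i \<le> xs ! j"
    using sorted_wrt_nth_less[OF assms(1), of i j] assms(3) by (cases "i = j") auto
qed

lemma segment_eq_interval:
  fixes xs :: "'a::linorder list"
  assumes sorted: "sorted_wrt (<) xs" and "i \<le> j" "j < length xs"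
  shows "(!) xs ` {i..<Suc j} = set xs \<inter> {xs ! i..xs ! j}"
proof (intro equalityI subsetI)
  fix y assume "y \<in> (!) xs ` {i..<Suc j}"
  then obtain m where "i \<le> m" "m \<le> j" "y = xs ! m"
    by auto
  then show "y \<in> set xs \<inter> {xs ! i..xs ! j}"
    using assms strict_sorted_nth_le_iff[OF sorted] by auto
next
  fix y assume "y \<in> set xs \<inter> {xs ! i..xs ! j}"
  then obtain m where "m < length xs" "y = xs ! m" "xs ! i \<le> xs ! m" "xs ! m \<le> xs ! j"
    by (auto simp: in_set_conv_nth)
  then show "y \<in> (!) xs ` {i..<Suc j}"
    using assms strict_sorted_nth_le_iff[OF sorted] by auto
qed

lemma is_interval_iff_segment:
  assumes sorted: "sorted_wrt (<) xs"
  shows "is_interval (set xs) J \<longleftrightarrow> (\<exists>i j. i < j \<and> j \<le> length xs \<and> J = (!) xs ` {i..<j})"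
proof
  assume "is_interval (set xs) J"
  then obtain i j where ij: "i < length xs" "j < length xs" "xs ! i \<le> xs ! j"
    and J: "J = set xs \<inter> {xs ! i..xs ! j}"
    unfolding is_interval_def by (metis in_set_conv_nth)
  then have "i \<le> j"
    using strict_sorted_nth_le_iff[OF sorted] by blast
  then show "\<exists>i j. i < j \<and> j \<le> length xs \<and> J = (!) xs ` {i..<j}"
    using ij J segment_eq_interval[OF sorted] by (intro exI[of _ i] exI[of _ "Suc j"]) auto
next
  assume "\<exists>i j. i < j \<and> j \<le> length xs \<and> J = (!) xs ` {i..<j}"
  then obtain i j' where "i < j'" "j' \<le> length xs" and J: "J = (!) xs ` {i..<j'}"
    by blast
  define j where "j = j' - 1"
  have ij: "i \<le> j" "j < length xs" and "j' = Suc j"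
    using \<open>i < j'\<close> \<open>j' \<le> length xs\<close> by (auto simp: j_def)
  with J have "J = set xs \<inter> {xs ! i..xs ! j}" "xs ! i \<le> xs ! j"
    using segment_eq_interval[OF sorted] strict_sorted_nth_le_iff[OF sorted] by auto
  then show "is_interval (set xs) J"
    unfolding is_interval_def using ij by fastforce
qed

lemma nth_mem_segment_iff:
  assumes "distinct xs" "c < length xs" "j \<le> length xs"
  shows "xs ! c \<in> (!) xs ` {i..<j} \<longleftrightarrow> i \<le> c \<and> c < j"
  using assms by (auto simp: nth_eq_iff_index_eq)

definition next_cut :: "nat set \<Rightarrow> nat \<Rightarrow> nat" where
  "next_cut C c = (LEAST d. d \<in> C \<and> c < d)"

lemma next_cut_least:
  assumes "d \<in> C" "c < d"
  shows "next_cut C c \<in> C" "c < next_cut C c" "next_cut C c \<le> d"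
proof -
  have "next_cut C c \<in> C \<and> c < next_cut C c"
    unfolding next_cut_def by (rule LeastI[of _ d]) (use assms in auto)
  then show "next_cut C c \<in> C" "c < next_cut C c"
    by auto
  show "next_cut C c \<le> d"
    unfolding next_cut_def by (rule Least_le) (use assms in auto)
qed

definition pieces :: "'a list \<Rightarrow> nat set \<Rightarrow> 'a set list" where
  "pieces xs C = map (\<lambda>c. (!) xs ` {c..<next_cut C c}) (sorted_list_of_set (C - {length xs}))"

lemma
  assumes "cut_set (length xs) C"
  shows length_pieces: "length (pieces xs C) = card C - 1"
    and piece_bounds: "I \<in> set (pieces xs C) \<Longrightarrow>
      \<exists>c. c \<in> C \<and> c < length xs \<and> next_cut C c \<le> length xs \<and> I = (!) xs ` {c..<next_cut C c}"
proof -
  have "finite C" "length xs \<in> C"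
    using assms finite_subset by (auto simp: cut_set_def)
  then show "length (pieces xs C) = card C - 1"
    by (simp add: pieces_def)
  show "\<exists>c. c \<in> C \<and> c < length xs \<and> next_cut C c \<le> length xs \<and> I = (!) xs ` {c..<next_cut C c}"
    if I: "I \<in> set (pieces xs C)"
  proof -
    obtain c where "c \<in> C - {length xs}" "I = (!) xs ` {c..<next_cut C c}"
      using I \<open>finite C\<close> by (auto simp: pieces_def)
    moreover from this have "c < length xs"
      using assms by (auto simp: cut_set_def)
    ultimately show ?thesis
      using next_cut_least(3)[OF \<open>length xs \<in> C\<close>] by blast
  qed
qed

lemma Union_pieces:
  assumes C: "cut_set (length xs) C"
  shows "\<Union>(set (pieces xs C)) = set xs"
proof (intro equalityI subsetI)
  fix x assume "x \<in> \<Union>(set (pieces xs C))"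
  then show "x \<in> set xs"
    using piece_bounds[OF C] by fastforce
next
  let ?n = "length xs"
  have "finite C" "?n \<in> C"
    using C finite_subset by (auto simp: cut_set_def)
  fix x assume "x \<in> set xs"
  then obtain u where u: "u < ?n" "x = xs ! u"
    by (auto simp: in_set_conv_nth)
  define c where "c = Max {c \<in> C. c \<le> u}"
  have "finite {c \<in> C. c \<le> u}" "0 \<in> {c \<in> C. c \<le> u}"
    using \<open>finite C\<close> C by (auto simp: cut_set_def)
  then have "c \<in> C" "c \<le> u"
    unfolding c_def using Max_in by blast+
  moreover have "u < next_cut C c"
    using Max_ge[OF \<open>finite {c \<in> C. c \<le> u}\<close>, of "next_cut C c"] next_cut_least[OF \<open>?n \<in> C\<close>, of c]
      \<open>c \<le> u\<close> u(1) unfolding c_def[symmetric] by fastforce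
  ultimately have "(!) xs ` {c..<next_cut C c} \<in> set (pieces xs C)"
    "x \<in> (!) xs ` {c..<next_cut C c}"
    using u \<open>finite C\<close> by (auto simp: pieces_def)
  then show "x \<in> \<Union>(set (pieces xs C))"
    by blast
qed

lemma interval_partition_pieces:
  assumes sorted: "sorted_wrt (<) xs" and C: "cut_set (length xs) C"
  shows "interval_partition (set xs) (pieces xs C)"
proof -
  let ?n = "length xs" and ?S = "sorted_list_of_set (C - {length xs})"
  have "finite C" "?n \<in> C"
    using C finite_subset by (auto simp: cut_set_def)
  have "\<forall>I\<in>set (pieces xs C). is_interval (set xs) I"
    using piece_bounds[OF C] next_cut_least(2)[OF \<open>?n \<in> C\<close>] is_interval_iff_segment[OF sorted] by blast
  moreover have "sorted_wrt set_less (pieces xs C)"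
    unfolding pieces_def sorted_wrt_map
  proof (rule sorted_wrt_mono_rel[where P = "(<)"])
    fix c c' assume "c \<in> set ?S" "c' \<in> set ?S" "c < c'"
    then have "next_cut C c \<le> c'" "next_cut C c' \<le> ?n"
      using \<open>finite C\<close> \<open>?n \<in> C\<close> C next_cut_least(3) by (auto simp: cut_set_def)
    then show "set_less ((!) xs ` {c..<next_cut C c}) ((!) xs ` {c'..<next_cut C c'})"
      unfolding set_less_def using sorted_wrt_nth_less[OF sorted] by fastforce
  qed (simp add: \<open>finite C\<close>)
  ultimately show ?thesis
    using Union_pieces[OF C] by (simp add: interval_partition_def)
qed

lemma interval_partition_segments:
  assumes sorted: "sorted_wrt (<) xs" and Js: "interval_partition (set xs) Js"
  obtains start stop where
    "\<And>J. J \<in> set Js \<Longrightarrow> start J < stop J \<and> stop J \<le> length xs \<and> J = (!) xs ` {start J..<stop J}"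
    "\<And>u. u < length xs \<Longrightarrow> \<exists>J\<in>set Js. start J \<le> u \<and> u < stop J"
proof -
  have "\<forall>J\<in>set Js. \<exists>i j. i < j \<and> j \<le> length xs \<and> J = (!) xs ` {i..<j}"
    using Js is_interval_iff_segment[OF sorted] by (auto simp: interval_partition_def)
  then obtain start stop where J_eq: "\<And>J. J \<in> set Js \<Longrightarrow>
      start J < stop J \<and> stop J \<le> length xs \<and> J = (!) xs ` {start J..<stop J}"
    by metis
  have covering: "\<exists>J\<in>set Js. start J \<le> u \<and> u < stop J" if "u < length xs" for u
  proof -
    have "xs ! u \<in> \<Union>(set Js)"
      using Js \<open>u < length xs\<close> by (simp add: interval_partition_def)
    then obtain J where "J \<in> set Js" "xs ! u \<in> J"
      by blast
    have "distinct xs"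
      using sorted by (simp add: strict_sorted_iff)
    have "stop J \<le> length xs" "J = (!) xs ` {start J..<stop J}"
      using J_eq[OF \<open>J \<in> set Js\<close>] by auto
    moreover from this(2) have "xs ! u \<in> (!) xs ` {start J..<stop J}"
      using \<open>xs ! u \<in> J\<close> by simp
    ultimately have "start J \<le> u \<and> u < stop J"
      using nth_mem_segment_iff[OF \<open>distinct xs\<close> \<open>u < length xs\<close>] by blast
    with \<open>J \<in> set Js\<close> show ?thesis
      by blast
  qed
  show ?thesis
    by (rule that[OF J_eq covering])
qed

lemma interval_partition_cut_set:
  assumes sorted: "sorted_wrt (<) xs" and "xs \<noteq> []" and Js: "interval_partition (set xs) Js"
  obtains C where "cut_set (length xs) C" "card C \<le> length Js + 1"
    "\<And>C'. C \<subseteq> C' \<Longrightarrow> cut_set (length xs) C' \<Longrightarrow> refines (pieces xs C') Js"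
proof -
  let ?n = "length xs"
  obtain start stop where J_eq: "\<And>J. J \<in> set Js \<Longrightarrow>
      start J < stop J \<and> stop J \<le> ?n \<and> J = (!) xs ` {start J..<stop J}"
    and covering: "\<And>u. u < ?n \<Longrightarrow> \<exists>J\<in>set Js. start J \<le> u \<and> u < stop J"
    using interval_partition_segments[OF sorted Js] by blast
  define C where "C = insert 0 (stop ` set Js)"
  have "cut_set ?n C"
  proof -
    obtain J where "J \<in> set Js" "?n - 1 < stop J"
      using covering[of "?n - 1"] \<open>xs \<noteq> []\<close> by auto
    then have "stop J = ?n"
      using J_eq[of J] by linarith
    then have "?n \<in> C"
      using \<open>J \<in> set Js\<close> unfolding C_def by (metis image_eqI insertCI)
    then show ?thesis
      using J_eq by (auto simp: cut_set_def C_def)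
  qed
  moreover have "card C \<le> length Js + 1"
  proof -
    have "card (stop ` set Js) \<le> length Js"
      by (meson card_image_le card_length finite_set le_trans)
    then show ?thesis
      unfolding C_def by (simp add: card_insert_if)
  qed
  moreover have "refines (pieces xs C') Js" if "C \<subseteq> C'" "cut_set ?n C'" for C'
    unfolding refines_def
  proof
    fix I assume "I \<in> set (pieces xs C')"
    then obtain c where c: "c < ?n" "I = (!) xs ` {c..<next_cut C' c}"
      using piece_bounds[OF \<open>cut_set ?n C'\<close>] by blast
    then obtain J where "J \<in> set Js" "start J \<le> c" "c < stop J"
      using covering by blast
    moreover have "next_cut C' c \<le> stop J"
      using next_cut_least(3) \<open>C \<subseteq> C'\<close> \<open>c < stop J\<close> \<open>J \<in> set Js\<close> unfolding C_def by blast
    moreover have "J = (!) xs ` {start J..<stop J}"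
      using J_eq \<open>J \<in> set Js\<close> by blast
    ultimately have "I \<subseteq> J"
      unfolding c(2) by (metis image_mono ivl_subset)
    with \<open>J \<in> set Js\<close> show "\<exists>J\<in>set Js. I \<subseteq> J" ..
  qed
  ultimately show ?thesis
    using that by blast
qed

section \<open>Refining a partition along the blocks\<close>

lemma card_Un_UN_atLeastAtMost_le:
  assumes "finite E" and "\<And>e. e \<in> E \<Longrightarrow> A e < e \<and> e < B e \<and> B e - A e < k" and "E \<subseteq> C"
  shows "card (C \<union> (\<Union>e\<in>E. {A e..B e})) \<le> card C + card E * (k - 1)"
proof -
  have "C \<union> (\<Union>e\<in>E. {A e..B e}) = C \<union> (\<Union>e\<in>E. {A e..B e} - {e})"
    using \<open>E \<subseteq> C\<close> by auto
  then have "card (C \<union> (\<Union>e\<in>E. {A e..B e})) \<le> card C + card (\<Union>e\<in>E. {A e..B e} - {e})"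
    by (simp add: card_Un_le)
  also have "card (\<Union>e\<in>E. {A e..B e} - {e}) \<le> (\<Sum>e\<in>E. card ({A e..B e} - {e}))"
    using \<open>finite E\<close> by (intro card_UN_le) auto
  also have "\<dots> \<le> (\<Sum>e\<in>E. k - 1)"
  proof (rule sum_mono)
    fix e assume "e \<in> E"
    then have "A e < e" "e < B e"
      using assms(2) by auto
    then have "card ({A e..B e} - {e}) = B e - A e"
      by (simp add: card_Diff_singleton)
    then show "card ({A e..B e} - {e}) \<le> k - 1"
      using assms(2) \<open>e \<in> E\<close> by fastforce
  qed
  finally show ?thesis
    by simp
qed

lemma next_cut_Suc_or_in:
  assumes "d \<in> C" "c \<in> C" "c < d"
    and neighbours: "\<And>x. x \<in> C \<Longrightarrow> x \<notin> L \<Longrightarrow> x - 1 \<in> C \<and> Suc x \<in> C"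
  shows "next_cut C c = Suc c \<or> (c \<in> L \<and> next_cut C c \<in> L)"
proof (cases "next_cut C c = Suc c")
  case False
  let ?d = "next_cut C c"
  have "?d \<in> C" "Suc c < ?d" and least: "\<And>y. y \<in> C \<Longrightarrow> c < y \<Longrightarrow> ?d \<le> y"
    using next_cut_least[OF assms(1,3)] next_cut_least(3) False by (auto simp: Suc_le_eq)
  have "Suc c \<notin> C"
    using least[of "Suc c"] \<open>Suc c < ?d\<close> by auto
  moreover have "?d - 1 \<notin> C"
  proof
    assume "?d - 1 \<in> C"
    moreover have "c < ?d - 1"
      using \<open>Suc c < ?d\<close> by linarith
    ultimately have "?d \<le> ?d - 1"
      using least by blast
    with \<open>Suc c < ?d\<close> show False
      by simp
  qed
  ultimately show ?thesis
    using neighbours[OF \<open>c \<in> C\<close>] neighbours[OF \<open>?d \<in> C\<close>] by blast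
qed simp

lemma refine_cut_set:
  assumes L: "short_gaps n k L" and C: "cut_set n C"
  obtains C' where "cut_set n C'" "C \<subseteq> C'" "card C' \<le> card C + card (C - L) * (k - 1)"
    "\<And>c. c \<in> C' \<Longrightarrow> c < n \<Longrightarrow> next_cut C' c = Suc c \<or> (c \<in> L \<and> next_cut C' c \<in> L)"
proof -
  have "\<forall>e\<in>C - L. \<exists>a b. a \<in> L \<and> b \<in> L \<and> a < e \<and> e < b \<and> b - a < k"
  proof
    fix e assume "e \<in> C - L"
    then have "e \<le> n" "e \<notin> L"
      using C by (auto simp: cut_set_def)
    then show "\<exists>a b. a \<in> L \<and> b \<in> L \<and> a < e \<and> e < b \<and> b - a < k"
      using L unfolding short_gaps_def by blast
  qed
  then obtain A B where AB: "\<And>e. e \<in> C - L \<Longrightarrow>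
      A e \<in> L \<and> B e \<in> L \<and> A e < e \<and> e < B e \<and> B e - A e < k"
    by metis
  have L_le: "l \<le> n" if "l \<in> L" for l
    using L that by (auto simp: short_gaps_def cut_set_def)
  define C' where "C' = C \<union> (\<Union>e\<in>C - L. {A e..B e})"
  have "cut_set n C'"
    using C AB L_le by (fastforce simp: cut_set_def C'_def)
  moreover have "card C' \<le> card C + card (C - L) * (k - 1)"
    unfolding C'_def using C finite_subset AB
    by (intro card_Un_UN_atLeastAtMost_le) (auto simp: cut_set_def)
  moreover have "x - 1 \<in> C' \<and> Suc x \<in> C'" if x: "x \<in> C'" "x \<notin> L" for x
  proof -
    obtain e where "e \<in> C - L" "A e \<le> x" "x \<le> B e"
      using x AB by (fastforce simp: C'_def)
    moreover have "A e \<noteq> x" "B e \<noteq> x"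
      using AB \<open>e \<in> C - L\<close> \<open>x \<notin> L\<close> by metis+
    ultimately have "x - 1 \<in> {A e..B e}" "Suc x \<in> {A e..B e}"
      by auto
    then show ?thesis
      unfolding C'_def using \<open>e \<in> C - L\<close> by blast
  qed
  moreover have "n \<in> C'"
    using \<open>cut_set n C'\<close> by (simp add: cut_set_def)
  ultimately show ?thesis
    using that[of C'] next_cut_Suc_or_in[of n C'] by (auto simp: C'_def)
qed

lemma card_Diff_cut_set_le:
  assumes "cut_set n C" "cut_set n L" "0 < n"
  shows "card (C - L) + 2 \<le> card C"
proof -
  have "finite C"
    using assms(1) finite_subset by (auto simp: cut_set_def)
  have "{0, n} \<subseteq> C \<inter> L"
    using assms(1,2) by (auto simp: cut_set_def)
  then have "2 \<le> card (C \<inter> L)"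
    using \<open>finite C\<close> \<open>0 < n\<close> card_mono[of "C \<inter> L" "{0, n}"] by simp
  moreover have "card (C - L) = card C - card (C \<inter> L)" "card (C \<inter> L) \<le> card C"
    using \<open>finite C\<close> by (simp_all add: card_Diff_subset_Int card_mono)
  ultimately show ?thesis
    by linarith
qed

lemma refined_count_bound:
  fixes r k c c' e :: nat
  assumes "c \<le> r + 1" "e + 2 \<le> c" "c' \<le> c + e * (k - 1)" "0 < k"
  shows "int (c' - 1) \<le> int r + (int k - 1) * (int r - 1)"
proof -
  have "e * (k - 1) \<le> (r - 1) * (k - 1)"
    using assms(1,2) by (intro mult_le_mono1) linarith
  then have "c' - 1 \<le> r + (r - 1) * (k - 1)"
    using assms(1,3) by linarith
  moreover have "int (r + (r - 1) * (k - 1)) = int r + (int k - 1) * (int r - 1)"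
    using assms by (simp add: of_nat_diff mult.commute)
  ultimately show ?thesis
    by linarith
qed

lemma refine_interval_partition:
  assumes sorted: "sorted_wrt (<) xs" and "xs \<noteq> []" and "0 < k"
    and L: "short_gaps (length xs) k L"
    and P_singleton: "\<forall>x\<in>set xs. P {x}"
    and P_block: "\<forall>a\<in>L. \<forall>b\<in>L. a < b \<longrightarrow> P ((!) xs ` {a..<b})"
    and Js: "interval_partition (set xs) Js"
  shows "\<exists>Is. interval_partition (set xs) Is \<and> refines Is Js \<and>
    int (length Is) \<le> int (length Js) + (int k - 1) * (int (length Js) - 1) \<and> (\<forall>I\<in>set Is. P I)"
proof -
  let ?n = "length xs"
  obtain C where C: "cut_set ?n C" "card C \<le> length Js + 1"
    and refines_Js: "\<And>C'. C \<subseteq> C' \<Longrightarrow> cut_set ?n C' \<Longrightarrow> refines (pieces xs C') Js"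
    using interval_partition_cut_set[OF sorted \<open>xs \<noteq> []\<close> Js] by blast
  obtain C' where C': "cut_set ?n C'" "C \<subseteq> C'" "card C' \<le> card C + card (C - L) * (k - 1)"
    and step: "\<And>c. c \<in> C' \<Longrightarrow> c < ?n \<Longrightarrow> next_cut C' c = Suc c \<or> (c \<in> L \<and> next_cut C' c \<in> L)"
    using refine_cut_set[OF L C(1)] by blast
  have "\<forall>I\<in>set (pieces xs C'). P I"
  proof
    fix I assume "I \<in> set (pieces xs C')"
    then obtain c where c: "c \<in> C'" "c < ?n" "I = (!) xs ` {c..<next_cut C' c}"
      using piece_bounds[OF C'(1)] by blast
    then have "c < next_cut C' c"
      using next_cut_least(2)[of ?n C' c] C'(1) by (auto simp: cut_set_def)
    then show "P I"
      using step[OF c(1,2)] P_singleton P_block c by auto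
  qed
  moreover have "card (C - L) + 2 \<le> card C"
    using card_Diff_cut_set_le[OF C(1)] L \<open>xs \<noteq> []\<close> by (simp add: short_gaps_def)
  then have "int (length (pieces xs C')) \<le> int (length Js) + (int k - 1) * (int (length Js) - 1)"
    using refined_count_bound[OF C(2) _ C'(3) \<open>0 < k\<close>] length_pieces[OF C'(1)] by simp
  ultimately show ?thesis
    using interval_partition_pieces[OF sorted C'(1)] refines_Js[OF C'(2,1)] by blast
qed

lemma refine_to_image_intervals:
  fixes g :: "nat \<Rightarrow> nat"
  assumes "finite X" "X \<noteq> {}" "0 < k" "g ` X \<subseteq> Y"
    and L: "short_gaps (card X) k L"
    and blocks: "\<forall>a\<in>L. \<forall>b\<in>L. a < b \<longrightarrow> is_interval Y (g ` ((!) (sorted_list_of_set X) ` {a..<b}))"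
  shows "\<forall>Js. interval_partition X Js \<longrightarrow>
    (\<exists>Is. interval_partition X Is \<and> refines Is Js \<and>
       int (length Is) \<le> int (length Js) + (int k - 1) * (int (length Js) - 1) \<and>
       (\<forall>I\<in>set Is. is_interval Y (g ` I)))"
proof (intro allI impI)
  fix Js assume "interval_partition X Js"
  let ?xs = "sorted_list_of_set X"
  have "is_interval Y (g ` {x})" if "x \<in> X" for x
    using that \<open>g ` X \<subseteq> Y\<close> unfolding is_interval_def by (intro bexI[of _ "g x"]) auto
  then show "\<exists>Is. interval_partition X Is \<and> refines Is Js \<and>
       int (length Is) \<le> int (length Js) + (int k - 1) * (int (length Js) - 1) \<and>
       (\<forall>I\<in>set Is. is_interval Y (g ` I))"
    using refine_interval_partition[of ?xs k L "\<lambda>I. is_interval Y (g ` I)" Js] assms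
      \<open>interval_partition X Js\<close> by simp
qed

section \<open>The bijection and its inverse\<close>

lemma order_iso_perm_image_segment:
  assumes "finite X" "finite Y" and iso: "order_iso_perm X Y f p"
    and "b \<le> length p" and p_seg: "(!) p ` {a..<b} = {Suc c..d}"
  shows "f ` ((!) (sorted_list_of_set X) ` {a..<b}) = (!) (sorted_list_of_set Y) ` {c..<d}"
proof -
  let ?xs = "sorted_list_of_set X" and ?ys = "sorted_list_of_set Y"
  have "f ` ((!) ?xs ` {a..<b}) = (\<lambda>j. ?ys ! (j - 1)) ` ((!) p ` {a..<b})"
    using iso \<open>b \<le> length p\<close> by (force simp: order_iso_perm_def image_image intro!: image_cong)
  also have "\<dots> = (!) ?ys ` ((\<lambda>j. j - 1) ` {Suc c..d})"
    unfolding p_seg by (simp add: image_image)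
  also have "(\<lambda>j. j - 1) ` {Suc c..d} = {c..<d}"
    by (force simp: image_iff intro: bexI[of _ "Suc _"])
  finally show ?thesis .
qed

lemma order_iso_perm_segment_intervals:
  assumes "finite X" "finite Y" "card X = n" "card Y = n" "bij_betw f X Y"
    and iso: "order_iso_perm X Y f p"
    and "a < b" "b \<le> n" "c < d" "d \<le> n" and p_seg: "(!) p ` {a..<b} = {Suc c..d}"
  shows "is_interval Y (f ` ((!) (sorted_list_of_set X) ` {a..<b}))"
    and "is_interval X (inv_into X f ` ((!) (sorted_list_of_set Y) ` {c..<d}))"
proof -
  let ?xs = "sorted_list_of_set X" and ?ys = "sorted_list_of_set Y"
  have "b \<le> length p"
    using iso assms(3,8) by (simp add: order_iso_perm_def)
  from order_iso_perm_image_segment[OF assms(1,2) iso this p_seg]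
  have f_seg: "f ` ((!) ?xs ` {a..<b}) = (!) ?ys ` {c..<d}" .
  then show "is_interval Y (f ` ((!) ?xs ` {a..<b}))"
    using is_interval_iff_segment[of ?ys] assms(2,4,9,10) by auto
  have "b \<le> length ?xs"
    using assms(1,3,8) by simp
  then have "(!) ?xs ` {a..<b} \<subseteq> set ?xs"
    by auto
  then have "(!) ?xs ` {a..<b} \<subseteq> X"
    using assms(1) by simp
  then have "inv_into X f ` (f ` ((!) ?xs ` {a..<b})) = (!) ?xs ` {a..<b}"
    by (rule inv_into_image_cancel[OF bij_betw_imp_inj_on[OF assms(5)]])
  then have "inv_into X f ` ((!) ?ys ` {c..<d}) = (!) ?xs ` {a..<b}"
    by (simp only: f_seg)
  then show "is_interval X (inv_into X f ` ((!) ?ys ` {c..<d}))"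
    using is_interval_iff_segment[of ?xs] assms(1,3,7,8) by auto
qed

lemma order_iso_perm_block_intervals:
  assumes "finite X" "finite Y" "card X = n" "card Y = n" "bij_betw f X Y"
    and iso: "order_iso_perm X Y f p"
    and L: "short_gaps n k L" "short_gaps n k L'" and corr: "segments_correspond p L L'"
  shows "\<forall>a\<in>L. \<forall>b\<in>L. a < b \<longrightarrow> is_interval Y (f ` ((!) (sorted_list_of_set X) ` {a..<b}))"
    and "\<forall>c\<in>L'. \<forall>d\<in>L'. c < d \<longrightarrow>
      is_interval X (inv_into X f ` ((!) (sorted_list_of_set Y) ` {c..<d}))"
proof -
  have le_n: "l \<le> n" if "l \<in> L \<union> L'" for l
    using L that by (auto simp: short_gaps_def cut_set_def)
  note segment_intervals = order_iso_perm_segment_intervals[OF assms(1-5) iso]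
  show "\<forall>a\<in>L. \<forall>b\<in>L. a < b \<longrightarrow> is_interval Y (f ` ((!) (sorted_list_of_set X) ` {a..<b}))"
  proof (intro ballI impI)
    fix a b assume "a \<in> L" "b \<in> L" "a < b"
    then obtain c d where "d \<in> L'" "c < d" "(!) p ` {a..<b} = {Suc c..d}"
      using corr unfolding segments_correspond_def by meson
    then show "is_interval Y (f ` ((!) (sorted_list_of_set X) ` {a..<b}))"
      using segment_intervals(1) le_n \<open>b \<in> L\<close> \<open>a < b\<close> by simp
  qed
  show "\<forall>c\<in>L'. \<forall>d\<in>L'. c < d \<longrightarrow>
      is_interval X (inv_into X f ` ((!) (sorted_list_of_set Y) ` {c..<d}))"
  proof (intro ballI impI)
    fix c d assume "c \<in> L'" "d \<in> L'" "c < d"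
    then obtain a b where "b \<in> L" "a < b" "(!) p ` {a..<b} = {Suc c..d}"
      using corr unfolding segments_correspond_def by meson
    then show "is_interval X (inv_into X f ` ((!) (sorted_list_of_set Y) ` {c..<d}))"
      using segment_intervals(2) le_n \<open>d \<in> L'\<close> \<open>c < d\<close> by simp
  qed
qed

theorem mainTheorem4:
  fixes X Y :: "nat set" and f :: "nat \<Rightarrow> nat" and p :: "nat list" and n k :: nat
  assumes "finite X" and "finite Y" and "card X = n" and "card Y = n" and "n \<ge> 1"
    and "bij_betw f X Y"
    and "order_iso_perm X Y f p"
    and "p \<in> H_plus k \<union> H_minus k"
  shows "(\<forall>Js. interval_partition X Js \<longrightarrow>
            (\<exists>Is. interval_partition X Is \<and> refines Is Js \<and>
               int (length Is) \<le> int (length Js) + (int k - 1) * (int (length Js) - 1) \<and>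
               (\<forall>I\<in>set Is. is_interval Y (f ` I))))
       \<and> (\<forall>Js. interval_partition Y Js \<longrightarrow>
            (\<exists>Is. interval_partition Y Is \<and> refines Is Js \<and>
               int (length Is) \<le> int (length Js) + (int k - 1) * (int (length Js) - 1) \<and>
               (\<forall>I\<in>set Is. is_interval X (inv_into X f ` I))))"
proof -
  have "0 < k"
    using assms(8) by (auto simp: H_plus_def H_minus_def)
  have "length p = n"
    using assms(3,7) by (simp add: order_iso_perm_def)
  obtain L L' where L: "short_gaps n k L" "short_gaps n k L'" and corr: "segments_correspond p L L'"
    using H_plus_union_H_minus_segments[OF assms(8)] \<open>length p = n\<close> by blast
  note blocks = order_iso_perm_block_intervals[OF assms(1-4,6,7) L corr]
  have "X \<noteq> {}" "Y \<noteq> {}"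
    using assms(1-5) by auto
  moreover have "f ` X \<subseteq> Y" "inv_into X f ` Y \<subseteq> X"
    using assms(6) bij_betw_inv_into by (blast dest: bij_betw_imp_surj_on)+
  ultimately show ?thesis
    using refine_to_image_intervals[of X k f Y L] refine_to_image_intervals[of Y k "inv_into X f" X L']
      assms(1-4) L blocks \<open>0 < k\<close> by simp
qed

end
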